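(* (1) Every generic length vector of length $n$ is equivalent to a generic length vector $(\ell_1,\ldots,\ell_n)$ whose entries are positive integers with $\ell_1\le\cdots\le\ell_n$ and $$\ell_n+\ell_{n-1}\le\ell_1+\cdots+\ell_{n-2}+1.$$ (2) If $\ell=(\ell_1,\ldots,\ell_n)$ is such a vector (generic, positive integer entries, nondecreasing, satisfying the displayed inequality), let $|\ell|=\ell_1+\cdots+\ell_n$ and define the length-$(n+1)$ vector $$\ell'=\Big(\ell_1,\ldots,\ell_{n-1},\tfrac{|\ell|+1}{2}-\ell_n,\tfrac{|\ell|+1}{2}\Big).$$ Then $\ell$ and $\ell'$ have the same gees.
   Context: A length vector is $\ell=(\ell_1,\ldots,\ell_n)$ of positive reals with $\ell_1\le\cdots\le\ell_n$ and $\ell_n<\ell_1+\cdots+\ell_{n-1}$; it is generic if no $S\subset\{1,\ldots,n\}$ has $\sum_{i\in S}\ell_i=\sum_{i\notin S}\ell_i$. $S$ is short if $\sum_{i\in S}\ell_i<\sum_{i\notin S}\ell_i$. Partially order subsets by $\{s_1,\ldots,s_p\}\le T$ if $T$ contains distinct elements $t_1,\ldots,t_p$ with $s_i\le t_i$. The genetic code of $\ell$ is the set of maximal elements (genes) among short subsets containing $n$; the gees are the genes with $n$ removed. Two length vectors are equivalent if they have the same genetic code (equivalently, homeomorphic polygon spaces $\overline{M}(\ell)=\{(z_i)\in(S^1)^n:\sum\ell_iz_i=0\}/O(2)$). *)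

theory Defs
  imports Complex_Main
begin

text \<open>A vector of length n is a function l :: nat => real, of which only the
entries l 1, ..., l n (indices in {1..n}) are relevant.\<close>

definition length_vector :: "nat \<Rightarrow> (nat \<Rightarrow> real) \<Rightarrow> bool" where
  "length_vector n l \<longleftrightarrow>
     (\<forall>i\<in>{1..n}. 0 < l i) \<and>
     (\<forall>i j. 1 \<le> i \<longrightarrow> i \<le> j \<longrightarrow> j \<le> n \<longrightarrow> l i \<le> l j) \<and>
     l n < (\<Sum>i=1..n-1. l i)"

definition generic :: "nat \<Rightarrow> (nat \<Rightarrow> real) \<Rightarrow> bool" where
  "generic n l \<longleftrightarrow>
     (\<forall>S. S \<subseteq> {1..n} \<longrightarrow> (\<Sum>i\<in>S. l i) \<noteq> (\<Sum>i\<in>{1..n} - S. l i))"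

definition short :: "nat \<Rightarrow> (nat \<Rightarrow> real) \<Rightarrow> nat set \<Rightarrow> bool" where
  "short n l S \<longleftrightarrow> S \<subseteq> {1..n} \<and> (\<Sum>i\<in>S. l i) < (\<Sum>i\<in>{1..n} - S. l i)"

text \<open>{s_1,...,s_p} <= T iff T contains distinct t_1,...,t_p with s_i <= t_i,
i.e. there is an injection f from S into T with s <= f s.\<close>
definition subset_le :: "nat set \<Rightarrow> nat set \<Rightarrow> bool" where
  "subset_le S T \<longleftrightarrow> (\<exists>f. inj_on f S \<and> f ` S \<subseteq> T \<and> (\<forall>s\<in>S. s \<le> f s))"

definition genes :: "nat \<Rightarrow> (nat \<Rightarrow> real) \<Rightarrow> nat set set" where
  "genes n l = {S. short n l S \<and> n \<in> S \<and>
       (\<forall>T. short n l T \<and> n \<in> T \<and> subset_le S T \<longrightarrow> T = S)}"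

definition gees :: "nat \<Rightarrow> (nat \<Rightarrow> real) \<Rightarrow> nat set set" where
  "gees n l = (\<lambda>S. S - {n}) ` genes n l"

definition equivalent_lv :: "nat \<Rightarrow> (nat \<Rightarrow> real) \<Rightarrow> (nat \<Rightarrow> real) \<Rightarrow> bool" where
  "equivalent_lv n l l' \<longleftrightarrow> genes n l = genes n l'"

definition normal_form :: "nat \<Rightarrow> (nat \<Rightarrow> real) \<Rightarrow> bool" where
  "normal_form n l \<longleftrightarrow> length_vector n l \<and> generic n l \<and>
     (\<forall>i\<in>{1..n}. l i \<in> \<int>) \<and>
     l n + l (n-1) \<le> (\<Sum>i=1..n-2. l i) + 1"

definition extend_lv :: "nat \<Rightarrow> (nat \<Rightarrow> real) \<Rightarrow> (nat \<Rightarrow> real)" where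
  "extend_lv n l = (let m = ((\<Sum>i=1..n. l i) + 1) / 2 in
     (\<lambda>i. if i < n then l i else if i = n then m - l n else m))"

end

theory Submission
  imports Defs
begin

text \<open>
  Whether a set is short is decided by finitely many strict inequalities between subset sums,
  so multiplying a generic vector by a large factor and rounding down keeps all short sets and
  makes the entries integers. If the integer vector L still violates
  l_n + l_(n-1) <= l_1 + ... + l_(n-2) + 1, let \<mu> be the largest L(A) over the
  A \<subseteq> {1..n-1} for which A \<union> {n} is short. No such A contains n-1, and A \<union> {n} is
  short iff n-1 \<notin> A and L(A) <= \<mu>. Capping l_1, ..., l_(n-2) at \<mu>+1 and putting
  l_(n-1) = \<mu>+1, l_n = (sum of the capped entries) - \<mu> keeps this description of the
  short sets containing n, makes the total odd (so the vector stays generic) and turns the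
  normal-form inequality into an equality.

  For (2), a set S containing n+1 is short for the extended vector iff n \<notin> S and
  (S - {n+1}) \<union> {n} is short for l. Hence both gees are the maximal elements of one and
  the same family of subsets of {1..n-1}.
\<close>

lemma sum_Icc_last:
  fixes n :: nat
  assumes "1 \<le> n"
  shows "sum f {1..n} = sum f {1..n-1} + f n"
proof -
  have "{1..n} = insert n {1..n-1}" "n \<notin> {1..n-1}"
    using assms by auto
  then show ?thesis
    by (simp add: add.commute)
qed

lemma sum_Icc_last_two:
  fixes n :: nat
  assumes "2 \<le> n"
  shows "sum f {1..n} = sum f {1..n-2} + f (n-1) + f n"
  using assms sum_Icc_last[of n f] sum_Icc_last[of "n-1" f] by (simp add: numeral_2_eq_2)

section \<open>Short sets and genericity\<close>

lemma short_iff_double_sum: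
  "short n l S \<longleftrightarrow> S \<subseteq> {1..n} \<and> 2 * sum l S < sum l {1..n}"
proof -
  have "S \<subseteq> {1..n} \<Longrightarrow> sum l ({1..n} - S) = sum l {1..n} - sum l S"
    by (simp add: sum_diff)
  then show ?thesis
    unfolding short_def by auto
qed

lemma short_last_iff:
  assumes "1 \<le> n" "n \<in> S"
  shows "short n l S \<longleftrightarrow>
    S - {n} \<subseteq> {1..n-1} \<and> 2 * sum l (S - {n}) + 2 * l n < sum l {1..n}"
proof -
  have range: "S \<subseteq> {1..n} \<longleftrightarrow> S - {n} \<subseteq> {1..n-1}"
    using assms by (auto simp: subset_iff)
  show ?thesis
  proof (cases "S \<subseteq> {1..n}")
    case True
    then have "sum l S = l n + sum l (S - {n})"
      using assms(2) finite_subset by (blast intro: sum.remove)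
    then show ?thesis
      using True range by (auto simp: short_iff_double_sum)
  next
    case False
    then show ?thesis
      using range by (simp add: short_def)
  qed
qed

lemma short_insert_last_iff:
  assumes "1 \<le> n" "A \<subseteq> {1..n-1}"
  shows "short n l (insert n A) \<longleftrightarrow> 2 * sum l A + 2 * l n < sum l {1..n}"
proof -
  have "n \<notin> A"
    using assms by auto
  then show ?thesis
    using assms short_last_iff[of n "insert n A" l] by simp
qed

lemma short_singleton_last_iff:
  assumes "1 \<le> n"
  shows "short n l {n} \<longleftrightarrow> l n < sum l {1..n-1}"
proof -
  have "{1..n} - {n} = {1..n-1}"
    using assms by auto
  then show ?thesis
    unfolding short_def using assms by auto
qed

lemma generic_if_odd_integer_total:
  assumes "\<forall>i\<in>{1..n}. l i \<in> \<int>" "k \<in> \<int>" "sum l {1..n} = 2 * k + 1"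
  shows "generic n l"
  unfolding generic_def
proof (intro allI impI)
  fix S assume S: "S \<subseteq> {1..n}"
  have "sum l S \<in> \<int>"
    using assms(1) S by (intro Ints_sum) auto
  then obtain a where a: "sum l S = of_int a"
    by (auto elim: Ints_cases)
  obtain b where b: "k = of_int b"
    using assms(2) by (auto elim: Ints_cases)
  have "sum l ({1..n} - S) = sum l {1..n} - sum l S"
    using S by (simp add: sum_diff)
  moreover have "2 * a \<noteq> 2 * b + 1"
    by presburger
  then have "2 * sum l S \<noteq> sum l {1..n}"
    unfolding assms(3) a b by linarith
  ultimately show "sum l S \<noteq> sum l ({1..n} - S)"
    by auto
qed

lemma length_vector_generic_ge_3:
  assumes "length_vector n l" "generic n l"
  shows "3 \<le> n"
proof (rule ccontr)
  assume "\<not> 3 \<le> n"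
  then consider "n = 0" | "n = 1" | "n = 2"
    by linarith
  then show False
  proof cases
    case 1
    then show False
      using assms(2) unfolding generic_def by simp
  next
    case 2
    then show False
      using assms(1) unfolding length_vector_def by auto
  next
    case 3
    then have "l 2 < l 1" "l 1 \<le> l 2"
      using assms(1) unfolding length_vector_def by auto
    then show False
      by simp
  qed
qed

section \<open>Genes as maximal sets\<close>

lemma subset_le_insert_iff:
  assumes "A \<subseteq> {..<m}" "B \<subseteq> {..<m}"
  shows "subset_le (insert m A) (insert m B) \<longleftrightarrow> subset_le A B"
proof
  assume "subset_le (insert m A) (insert m B)"
  then obtain f where f: "inj_on f (insert m A)" "f ` insert m A \<subseteq> insert m B"
      "\<forall>s\<in>insert m A. s \<le> f s"
    unfolding subset_le_def by blast
  have "f m = m"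
    using f(2,3) assms(2) by force
  then have "f ` A \<subseteq> B"
    using f(1,2) assms(1) by (fastforce simp: inj_on_def)
  then show "subset_le A B"
    unfolding subset_le_def using f by (meson inj_on_insert insertCI)
next
  assume "subset_le A B"
  then obtain f where f: "inj_on f A" "f ` A \<subseteq> B" "\<forall>s\<in>A. s \<le> f s"
    unfolding subset_le_def by blast
  have "m \<notin> A" "m \<notin> B"
    using assms by auto
  then have "inj_on (f(m := m)) (insert m A) \<and> f(m := m) ` insert m A \<subseteq> insert m B \<and>
      (\<forall>s\<in>insert m A. s \<le> (f(m := m)) s)"
    using f by (auto simp: inj_on_def)
  then show "subset_le (insert m A) (insert m B)"
    unfolding subset_le_def by blast
qed

definition maximal_sets :: "nat set set \<Rightarrow> nat set set" where
  "maximal_sets Q = {A \<in> Q. \<forall>B\<in>Q. subset_le A B \<longrightarrow> B = A}"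

lemma gees_eq_maximal_sets:
  assumes short_iff: "\<And>S. N \<in> S \<Longrightarrow> short N l S \<longleftrightarrow> S - {N} \<in> Q"
    and below: "\<And>A. A \<in> Q \<Longrightarrow> A \<subseteq> {..<N}"
  shows "gees N l = maximal_sets Q"
proof -
  have not_mem: "N \<notin> A" if "A \<in> Q" for A
    using below[OF that] by blast
  have short_insert: "short N l (insert N A)" if "A \<in> Q" for A
    using short_iff[of "insert N A"] not_mem[OF that] that by simp
  show ?thesis
  proof (rule set_eqI, rule iffI)
    fix A assume "A \<in> gees N l"
    then obtain S where S: "S \<in> genes N l" "A = S - {N}"
      unfolding gees_def by blast
    then have "N \<in> S" "short N l S"
        and max: "\<And>T. short N l T \<Longrightarrow> N \<in> T \<Longrightarrow> subset_le S T \<Longrightarrow> T = S"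
      unfolding genes_def by auto
    then have A: "A \<in> Q" "S = insert N A"
      using short_iff S(2) by auto
    have "B = A" if B: "B \<in> Q" "subset_le A B" for B
    proof -
      have "subset_le S (insert N B)"
        using subset_le_insert_iff[OF below below] A B by simp
      then have "insert N B = S"
        using max short_insert[OF B(1)] by blast
      then show "B = A"
        using A not_mem B(1) by (metis Diff_insert_absorb)
    qed
    with A show "A \<in> maximal_sets Q"
      unfolding maximal_sets_def by blast
  next
    fix A assume A: "A \<in> maximal_sets Q"
    then have AQ: "A \<in> Q"
      unfolding maximal_sets_def by blast
    have "insert N A \<in> genes N l"
      unfolding genes_def
    proof (intro CollectI conjI allI impI)
      show "short N l (insert N A)" "N \<in> insert N A"
        using short_insert AQ by auto
      fix T assume T: "short N l T \<and> N \<in> T \<and> subset_le (insert N A) T"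
      then have TQ: "T - {N} \<in> Q" and T_eq: "T = insert N (T - {N})"
        using short_iff by auto
      then have "subset_le A (T - {N})"
        using subset_le_insert_iff[OF below below] AQ T by metis
      then have "T - {N} = A"
        using A TQ unfolding maximal_sets_def by blast
      then show "T = insert N A"
        using T_eq by simp
    qed
    moreover have "A = insert N A - {N}"
      using not_mem AQ by simp
    ultimately show "A \<in> gees N l"
      unfolding gees_def by blast
  qed
qed

lemma genes_cong:
  assumes "\<And>S. n \<in> S \<Longrightarrow> short n l S \<longleftrightarrow> short n l' S"
  shows "genes n l = genes n l'"
  using assms unfolding genes_def by blast

section \<open>The extended vector\<close>

lemma extend_lv_eq:
  "extend_lv n l i =
     (if i < n then l i
      else if i = n then (sum l {1..n} + 1) / 2 - l n
      else (sum l {1..n} + 1) / 2)"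
  unfolding extend_lv_def Let_def by simp

lemma sum_extend_lv_low:
  assumes "A \<subseteq> {1..n-1}" "1 \<le> n"
  shows "sum (extend_lv n l) A = sum l A"
  using assms by (intro sum.cong) (auto simp: extend_lv_eq)

lemma sum_extend_lv_total:
  assumes n: "1 \<le> n"
  shows "sum (extend_lv n l) {1..n+1} = 2 * sum l {1..n} - 2 * l n + 1"
proof -
  have "sum (extend_lv n l) {1..n+1} =
      sum (extend_lv n l) {1..n-1} + extend_lv n l n + extend_lv n l (n+1)"
    using sum_Icc_last_two[of "n+1" "extend_lv n l"] n by simp
  moreover have "extend_lv n l n = (sum l {1..n} + 1) / 2 - l n"
    "extend_lv n l (n+1) = (sum l {1..n} + 1) / 2"
    by (simp_all add: extend_lv_eq)
  moreover have "sum l {1..n} = sum l {1..n-1} + l n"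
    using sum_Icc_last[OF n] .
  ultimately show ?thesis
    using sum_extend_lv_low[of "{1..n-1}" n l] n by (simp add: field_simps)
qed

lemma short_extend_lv_last_iff:
  assumes n: "1 \<le> n" and nonneg: "\<forall>i\<in>{1..n-1}. 0 \<le> l i" and S: "n+1 \<in> S"
  shows "short (n+1) (extend_lv n l) S \<longleftrightarrow>
    S - {n+1} \<subseteq> {1..n-1} \<and> 2 * sum l (S - {n+1}) + 2 * l n < sum l {1..n}"
proof (cases "n \<in> S")
  case True
  define A where "A = S - {n, n+1}"
  have "\<not> short (n+1) (extend_lv n l) S"
  proof
    assume "short (n+1) (extend_lv n l) S"
    then have A: "A \<subseteq> {1..n-1}"
        and short: "2 * sum (extend_lv n l) S < sum (extend_lv n l) {1..n+1}"
      unfolding A_def short_iff_double_sum by auto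
    have "S = insert n (insert (n+1) A)" "n \<notin> A" "n+1 \<notin> A"
      using True S unfolding A_def by auto
    then have "sum (extend_lv n l) S = sum l A + sum l {1..n} + 1 - l n"
      using sum_extend_lv_low[OF A n] finite_subset[OF A] by (simp add: extend_lv_eq)
    moreover have "0 \<le> sum l A"
      using A nonneg by (intro sum_nonneg) auto
    ultimately show False
      using short sum_extend_lv_total[OF n] by simp
  qed
  then show ?thesis
    using True n by auto
next
  case False
  define A where "A = S - {n+1}"
  have "{1..n} = insert n {1..n-1}"
    using n by auto
  then have range: "A \<subseteq> {1..n} \<longleftrightarrow> A \<subseteq> {1..n-1}"
    using False unfolding A_def by (simp add: subset_insert)
  have "short (n+1) (extend_lv n l) S \<longleftrightarrow> A \<subseteq> {1..n} \<and>
      2 * sum (extend_lv n l) A + 2 * extend_lv n l (n+1) < sum (extend_lv n l) {1..n+1}"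
    using short_last_iff[of "n+1" S] S unfolding A_def by simp
  also have "\<dots> \<longleftrightarrow> A \<subseteq> {1..n-1} \<and> 2 * sum l A + 2 * l n < sum l {1..n}"
    using range sum_extend_lv_low[OF _ n] sum_extend_lv_total[OF n]
    by (auto simp: extend_lv_eq add_divide_distrib)
  finally show ?thesis
    unfolding A_def .
qed

lemma gees_extend_lv:
  assumes n: "1 \<le> n" and nonneg: "\<forall>i\<in>{1..n-1}. 0 \<le> l i"
  shows "gees n l = gees (n+1) (extend_lv n l)"
proof -
  define Q where "Q = {A. A \<subseteq> {1..n-1} \<and> 2 * sum l A + 2 * l n < sum l {1..n}}"
  have below: "A \<subseteq> {..<n}" "A \<subseteq> {..<n+1}" if "A \<in> Q" for A
    using that n unfolding Q_def by (auto simp: subset_iff)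
  have "gees n l = maximal_sets Q"
    using below short_last_iff[OF n] unfolding Q_def by (intro gees_eq_maximal_sets) auto
  also have "\<dots> = gees (n+1) (extend_lv n l)"
    using below short_extend_lv_last_iff[OF n nonneg] unfolding Q_def
    by (intro gees_eq_maximal_sets[symmetric]) auto
  finally show ?thesis .
qed

section \<open>Integer approximation\<close>

lemma floor_scaled_sum_compare:
  fixes l :: "nat \<Rightarrow> real"
  assumes "finite I" "S \<subseteq> I" "real (card I) < N * \<bar>sum l S - sum l (I - S)\<bar>"
  defines "L \<equiv> \<lambda>i. real_of_int \<lfloor>N * l i\<rfloor>"
  shows "sum L S < sum L (I - S) \<longleftrightarrow> sum l S < sum l (I - S)"
    and "sum L S \<noteq> sum L (I - S)"
proof -
  define e where "e i = N * l i - L i" for i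
  define x where "x = N * (sum l S - sum l (I - S))"
  define d where "d = sum e S - sum e (I - S)"
  have e_bounds: "0 \<le> e i" "e i \<le> 1" for i
    unfolding e_def L_def by linarith+
  have N: "0 < N"
    using assms(3) by (smt (verit) of_nat_0_le_iff mult_nonpos_nonneg abs_ge_zero)
  have "sum e S + sum e (I - S) = sum e I"
    using assms(1,2) by (metis add.commute sum.subset_diff)
  moreover have "sum e I \<le> real (card I)"
    using sum_bounded_above[of I e 1] e_bounds by simp
  moreover have "0 \<le> sum e S" "0 \<le> sum e (I - S)"
    using e_bounds by (simp_all add: sum_nonneg)
  moreover have "real (card I) < \<bar>x\<bar>"
    using assms(3) N unfolding x_def by (simp add: abs_mult)
  ultimately have "\<bar>d\<bar> < \<bar>x\<bar>"
    unfolding d_def by linarith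
  then have "(x - d < 0 \<longleftrightarrow> x < 0) \<and> x - d \<noteq> 0"
    by (smt (verit))
  moreover have "sum L S - sum L (I - S) = x - d"
    unfolding x_def d_def e_def by (simp add: sum_subtractf sum_distrib_left algebra_simps)
  moreover have "x < 0 \<longleftrightarrow> sum l S < sum l (I - S)"
    unfolding x_def using N by (simp add: mult_less_0_iff)
  ultimately show "sum L S < sum L (I - S) \<longleftrightarrow> sum l S < sum l (I - S)"
    and "sum L S \<noteq> sum L (I - S)"
    by linarith+
qed

lemma exists_integer_lv_same_short:
  assumes lv: "length_vector n l" and gen: "generic n l"
  obtains L where "length_vector n L" "generic n L" "\<forall>i\<in>{1..n}. L i \<in> \<int>"
    "\<And>S. short n L S \<longleftrightarrow> short n l S"
proof -
  have n: "3 \<le> n"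
    using length_vector_generic_ge_3[OF lv gen] .
  have pos: "0 < l i" if "i \<in> {1..n}" for i
    using lv that unfolding length_vector_def by blast
  have mono: "l i \<le> l j" if "1 \<le> i" "i \<le> j" "j \<le> n" for i j
    using lv that unfolding length_vector_def by blast
  define gap where "gap S = \<bar>sum l S - sum l ({1..n} - S)\<bar>" for S
  define \<delta> where "\<delta> = Min (gap ` Pow {1..n})"
  have \<delta>: "0 < \<delta>" "\<And>S. S \<subseteq> {1..n} \<Longrightarrow> \<delta> \<le> gap S"
    using gen unfolding \<delta>_def generic_def by (subst Min_gr_iff) (auto simp: gap_def)
  define N where "N = real n / \<delta> + 1 / l 1"
  have "l 1 > 0"
    using pos n by simp
  then have N_nonneg: "0 \<le> N" and N_l1: "1 \<le> N * l 1"
    using \<delta> unfolding N_def by (simp_all add: distrib_right)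
  have "real n < N * \<delta>"
    using \<delta> \<open>l 1 > 0\<close> unfolding N_def by (simp add: distrib_right)
  then have card_less: "real (card {1..n}) < N * gap S" if "S \<subseteq> {1..n}" for S
    using \<delta>(2)[OF that] N_nonneg by (smt (verit) card_atLeastAtMost diff_Suc_1 mult_left_mono)
  define L where "L i = real_of_int \<lfloor>N * l i\<rfloor>" for i
  note compare = floor_scaled_sum_compare[OF finite_atLeastAtMost _ card_less[unfolded gap_def],
      folded L_def]
  have short_eq: "short n L S \<longleftrightarrow> short n l S" for S
    unfolding short_def using compare(1) by blast
  have "1 \<le> L i" if "i \<in> {1..n}" for i
    using mono[of 1 i] that N_nonneg N_l1 mult_left_mono[of "l 1" "l i" N] unfolding L_def
    by fastforce
  moreover have "L i \<le> L j" if "1 \<le> i" "i \<le> j" "j \<le> n" for i j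
    unfolding L_def using mono[OF that] N_nonneg by (simp add: floor_mono mult_left_mono)
  moreover have "L n < sum L {1..n-1}"
    using lv short_eq[of "{n}"] short_singleton_last_iff[of n] n
    by (simp add: length_vector_def)
  ultimately have "length_vector n L"
    unfolding length_vector_def by force
  moreover have "generic n L"
    unfolding generic_def using compare(2) by blast
  moreover have "\<forall>i\<in>{1..n}. L i \<in> \<int>"
    unfolding L_def by simp
  ultimately show thesis
    using that short_eq by blast
qed

section \<open>Capping\<close>

lemma Ints_double_less_odd_iff:
  fixes x y :: real
  assumes "x \<in> \<int>" "y \<in> \<int>"
  shows "2 * x < 2 * y + 1 \<longleftrightarrow> x \<le> y"
  using assms by (auto elim!: Ints_cases)

lemma Ints_less_imp_add_one_le:
  fixes x y :: real
  assumes "x \<in> \<int>" "y \<in> \<int>" "x < y"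
  shows "x + 1 \<le> y"
  using assms by (auto elim!: Ints_cases)

lemma sum_min_eq_if_sum_le:
  fixes f :: "'a \<Rightarrow> real"
  assumes "finite A" "\<forall>x\<in>A. 0 \<le> f x" "sum f A \<le> c"
  shows "(\<Sum>x\<in>A. min (f x) c) = sum f A"
proof (rule sum.cong)
  fix x assume "x \<in> A"
  then have "f x \<le> sum f A"
    using assms(1,2) by (intro member_le_sum) auto
  then show "min (f x) c = f x"
    using assms(3) by simp
qed simp

lemma sum_min_le_iff:
  fixes f :: "'a \<Rightarrow> real"
  assumes "finite A" "\<forall>x\<in>A. 0 \<le> f x" "0 \<le> b"
  shows "(\<Sum>x\<in>A. min (f x) (b + 1)) \<le> b \<longleftrightarrow> sum f A \<le> b"
proof
  assume le: "(\<Sum>x\<in>A. min (f x) (b + 1)) \<le> b"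
  have "min (f x) (b + 1) = f x" if "x \<in> A" for x
  proof -
    have "min (f x) (b + 1) \<le> (\<Sum>x\<in>A. min (f x) (b + 1))"
      using assms that by (intro member_le_sum) auto
    then show ?thesis
      using le by linarith
  qed
  then show "sum f A \<le> b"
    using le by simp
next
  assume "sum f A \<le> b"
  then show "(\<Sum>x\<in>A. min (f x) (b + 1)) \<le> b"
    using sum_min_eq_if_sum_le[OF assms(1,2), of "b + 1"] by simp
qed

lemma sum_min_ge_double_add_one:
  fixes L :: "'a \<Rightarrow> real"
  assumes "finite I" "B \<subseteq> I" "\<forall>i\<in>I. 0 \<le> L i \<and> L i \<in> \<int>"
    and "\<mu> \<in> \<int>" "0 \<le> \<mu>" "sum L B = \<mu>" "2 * \<mu> < sum L I"
  shows "2 * \<mu> + 1 \<le> (\<Sum>i\<in>I. min (L i) (\<mu> + 1))"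
proof -
  define c where "c i = min (L i) (\<mu> + 1)" for i
  have fin: "finite B" "finite (I - B)"
    using assms(1,2) finite_subset by auto
  have nonneg: "\<forall>i\<in>B. 0 \<le> L i" "\<forall>i\<in>I - B. 0 \<le> L i"
    using assms(2,3) by auto
  have "sum c B = \<mu>"
    unfolding c_def using sum_min_eq_if_sum_le[OF fin(1) nonneg(1)] assms(6) by simp
  moreover have "\<mu> < sum c (I - B)"
  proof (rule ccontr)
    assume "\<not> \<mu> < sum c (I - B)"
    then have "sum L (I - B) \<le> \<mu>"
      unfolding c_def using sum_min_le_iff[OF fin(2) nonneg(2) assms(5)] by simp
    moreover have "sum L I = sum L B + sum L (I - B)"
      using sum.subset_diff[OF assms(2,1), of L] by simp
    ultimately show False
      using assms(6,7) by linarith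
  qed
  moreover have "sum c (I - B) \<in> \<int>"
    unfolding c_def using assms(3,4) by (intro Ints_sum) (auto simp: min_def)
  ultimately have "2 * \<mu> + 1 \<le> sum c B + sum c (I - B)"
    using Ints_less_imp_add_one_le[OF assms(4)] by fastforce
  also have "\<dots> = sum c I"
    using sum.subset_diff[OF assms(2,1), of c] by simp
  finally show ?thesis
    unfolding c_def .
qed

definition capped_lv :: "nat \<Rightarrow> real \<Rightarrow> (nat \<Rightarrow> real) \<Rightarrow> nat \<Rightarrow> real" where
  "capped_lv n \<mu> L i =
     (if i \<le> n - 2 then min (L i) (\<mu> + 1)
      else if i = n - 1 then \<mu> + 1
      else (\<Sum>j=1..n-2. min (L j) (\<mu> + 1)) - \<mu>)"

lemma sum_capped_lv_low:
  assumes "A \<subseteq> {1..n-2}"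
  shows "sum (capped_lv n \<mu> L) A = (\<Sum>i\<in>A. min (L i) (\<mu> + 1))"
  using assms by (intro sum.cong) (auto simp: capped_lv_def)

lemma sum_capped_lv_total:
  assumes "3 \<le> n"
  shows "sum (capped_lv n \<mu> L) {1..n} = 2 * (\<Sum>j=1..n-2. min (L j) (\<mu> + 1)) + 1"
proof -
  have "capped_lv n \<mu> L (n-1) = \<mu> + 1" "capped_lv n \<mu> L n = (\<Sum>j=1..n-2. min (L j) (\<mu> + 1)) - \<mu>"
    using assms by (auto simp: capped_lv_def)
  then show ?thesis
    using sum_Icc_last_two[of n "capped_lv n \<mu> L"] sum_capped_lv_low[of "{1..n-2}" n \<mu> L] assms
    by simp
qed

lemma short_capped_lv_iff:
  assumes n: "3 \<le> n" and L: "\<forall>i\<in>{1..n-2}. 0 \<le> L i \<and> L i \<in> \<int>"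
    and \<mu>: "\<mu> \<in> \<int>" "0 \<le> \<mu>" and A: "A \<subseteq> {1..n-1}"
  shows "short n (capped_lv n \<mu> L) (insert n A) \<longleftrightarrow> n - 1 \<notin> A \<and> sum L A \<le> \<mu>"
proof -
  define l' where "l' = capped_lv n \<mu> L"
  have l'_entry: "0 \<le> l' i" "l' i \<in> \<int>" if "i \<in> {1..n-1}" for i
    using that L \<mu> by (auto simp: l'_def capped_lv_def min_def)
  have prev: "l' (n - 1) = \<mu> + 1"
    using n by (auto simp: l'_def capped_lv_def)
  have last: "l' n = (\<Sum>j=1..n-2. min (L j) (\<mu> + 1)) - \<mu>"
    using n by (auto simp: l'_def capped_lv_def)
  have "n \<notin> A"
    using A n by auto
  then have "short n l' (insert n A) \<longleftrightarrow> 2 * sum l' A < 2 * \<mu> + 1"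
    using short_last_iff[of n "insert n A" l'] A n sum_capped_lv_total[OF n, of \<mu> L]
    unfolding last l'_def[symmetric] by (simp add: algebra_simps)
  also have "\<dots> \<longleftrightarrow> sum l' A \<le> \<mu>"
    using A l'_entry(2) \<mu>(1) by (intro Ints_double_less_odd_iff Ints_sum) auto
  also have "\<dots> \<longleftrightarrow> n - 1 \<notin> A \<and> sum L A \<le> \<mu>"
  proof (cases "n - 1 \<in> A")
    case True
    have "l' (n - 1) \<le> sum l' A"
      using A True l'_entry(1) finite_subset[OF A] by (intro member_le_sum) auto
    then show ?thesis
      using True prev by simp
  next
    case False
    have A': "A \<subseteq> {1..n-2}"
    proof
      fix i assume "i \<in> A"
      then have "i \<in> {1..n-1}" "i \<noteq> n - 1"
        using A False by auto
      then show "i \<in> {1..n-2}"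
        by auto
    qed
    then show ?thesis
      using False L \<mu>(2) sum_min_le_iff[OF finite_subset[OF A'], of L \<mu>]
      unfolding l'_def sum_capped_lv_low[OF A'] by auto
  qed
  finally show ?thesis
    unfolding l'_def .
qed

lemma normal_form_capped_lv:
  assumes n: "3 \<le> n" and lv: "length_vector n L" and int: "\<forall>i\<in>{1..n}. L i \<in> \<int>"
    and \<mu>: "\<mu> \<in> \<int>" "0 \<le> \<mu>" and wide: "2 * \<mu> + 1 \<le> (\<Sum>j=1..n-2. min (L j) (\<mu> + 1))"
  shows "normal_form n (capped_lv n \<mu> L)"
proof -
  define S' where "S' = (\<Sum>j=1..n-2. min (L j) (\<mu> + 1))"
  define l' where "l' = capped_lv n \<mu> L"
  have pos: "0 < L i" and mono: "L i \<le> L j" if "1 \<le> i" "i \<le> j" "j \<le> n" for i j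
    using lv that unfolding length_vector_def by auto
  have l'_cases:
      "l' i = (if i \<le> n - 2 then min (L i) (\<mu> + 1) else if i = n - 1 then \<mu> + 1 else S' - \<mu>)" for i
    unfolding l'_def capped_lv_def S'_def ..
  have prev: "l' (n - 1) = \<mu> + 1" and last: "l' n = S' - \<mu>"
    using n by (auto simp: l'_cases)
  have low: "sum l' {1..n-2} = S'"
    unfolding l'_def S'_def by (rule sum_capped_lv_low) simp
  have total: "sum l' {1..n} = 2 * S' + 1"
    unfolding l'_def S'_def by (rule sum_capped_lv_total[OF n])
  have prefix: "sum l' {1..n-1} = S' + (\<mu> + 1)"
    using sum_Icc_last[of "n-1" l'] n low prev by (simp add: numeral_2_eq_2)
  have S'_int: "S' \<in> \<int>"
    unfolding S'_def using int \<mu>(1) by (intro Ints_sum) (auto simp: min_def)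
  have "length_vector n l'"
    unfolding length_vector_def
  proof (intro conjI ballI allI impI)
    show "0 < l' i" if "i \<in> {1..n}" for i
      using that pos[of i i] \<mu>(2) wide n by (auto simp: l'_cases S'_def)
    show "l' i \<le> l' j" if "1 \<le> i" "i \<le> j" "j \<le> n" for i j
      using that mono[OF that] wide by (auto simp: l'_cases S'_def)
    show "l' n < sum l' {1..n-1}"
      using prefix last \<mu>(2) by simp
  qed
  moreover have "generic n l'"
    using total S'_int int \<mu>(1) n
    by (intro generic_if_odd_integer_total[of n l' S']) (auto simp: l'_cases min_def)
  moreover have "\<forall>i\<in>{1..n}. l' i \<in> \<int>"
    using S'_int int \<mu>(1) by (auto simp: l'_cases min_def)
  moreover have "l' n + l' (n-1) \<le> sum l' {1..n-2} + 1"
    using low prev last by simp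
  ultimately show ?thesis
    unfolding normal_form_def l'_def by blast
qed

lemma prev_not_mem_if_short_insert_last:
  assumes n: "3 \<le> n" and lv: "length_vector n L" and long: "sum L {1..n-2} \<le> L (n-1) + L n"
    and A: "A \<subseteq> {1..n-1}" "short n L (insert n A)"
  shows "n - 1 \<notin> A"
proof
  assume "n - 1 \<in> A"
  moreover have "\<forall>i\<in>A. 0 \<le> L i"
    using A(1) lv unfolding length_vector_def by (fastforce intro: less_imp_le)
  ultimately have "L (n-1) \<le> sum L A"
    using A(1) by (intro member_le_sum) (auto intro: finite_subset)
  moreover have "2 * sum L A + 2 * L n < sum L {1..n}"
    using A n short_insert_last_iff[of n A L] by simp
  moreover have "sum L {1..n} = sum L {1..n-2} + L (n-1) + L n"
    using n by (intro sum_Icc_last_two) simp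
  ultimately show False
    using long by linarith
qed

lemma exists_short_threshold:
  assumes n: "3 \<le> n" and lv: "length_vector n L" and int: "\<forall>i\<in>{1..n}. L i \<in> \<int>"
    and long: "sum L {1..n-2} \<le> L (n-1) + L n"
  obtains \<mu> B where "\<mu> \<in> \<int>" "0 \<le> \<mu>"
    "\<And>A. A \<subseteq> {1..n-1} \<Longrightarrow> short n L (insert n A) \<longleftrightarrow> n - 1 \<notin> A \<and> sum L A \<le> \<mu>"
    "B \<subseteq> {1..n-2}" "short n L (insert n B)" "sum L B = \<mu>"
proof -
  define P where "P = {A. A \<subseteq> {1..n-1} \<and> short n L (insert n A)}"
  have "{} \<in> P"
    using lv short_singleton_last_iff[of n L] n unfolding P_def length_vector_def by simp
  moreover have "finite P"
    unfolding P_def by (rule finite_subset[of _ "Pow {1..n-1}"]) auto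
  ultimately have "Max (sum L ` P) \<in> sum L ` P"
    by (intro Max_in) auto
  then obtain B where B: "B \<in> P" "sum L B = Max (sum L ` P)"
    by (metis imageE)
  have B_max: "sum L A \<le> sum L B" if "A \<in> P" for A
    using \<open>finite P\<close> that unfolding B(2) by simp
  have short_iff: "short n L (insert n A) \<longleftrightarrow> 2 * sum L A + 2 * L n < sum L {1..n}"
    if "A \<subseteq> {1..n-1}" for A
    using that n by (intro short_insert_last_iff) auto
  have not_prev: "n - 1 \<notin> A" if "A \<in> P" for A
    using that prev_not_mem_if_short_insert_last[OF n lv long] unfolding P_def by blast
  have B_low: "B \<subseteq> {1..n-2}"
  proof
    fix i assume "i \<in> B"
    then have "i \<in> {1..n-1}" "i \<noteq> n - 1"
      using B(1) not_prev[OF B(1)] unfolding P_def by auto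
    then show "i \<in> {1..n-2}"
      by auto
  qed
  have B_short: "2 * sum L B + 2 * L n < sum L {1..n}"
    using B(1) short_iff unfolding P_def by blast
  show thesis
  proof (rule that[of "sum L B" B])
    show "sum L B \<in> \<int>"
      using B_low int by (intro Ints_sum) (auto simp: subset_iff)
    show "0 \<le> sum L B"
      using B_max[OF \<open>{} \<in> P\<close>] by simp
    show "short n L (insert n B)"
      using B(1) unfolding P_def by blast
    show "short n L (insert n A) \<longleftrightarrow> n - 1 \<notin> A \<and> sum L A \<le> sum L B" if A: "A \<subseteq> {1..n-1}" for A
    proof
      assume "short n L (insert n A)"
      then have "A \<in> P"
        unfolding P_def using A by blast
      then show "n - 1 \<notin> A \<and> sum L A \<le> sum L B"
        using not_prev B_max by blast
    next
      assume "n - 1 \<notin> A \<and> sum L A \<le> sum L B"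
      then show "short n L (insert n A)"
        using short_iff[OF A] B_short by linarith
    qed
  qed (use B_low in simp_all)
qed

lemma capped_sum_ge_double_threshold:
  assumes n: "3 \<le> n" and lv: "length_vector n L" and int: "\<forall>i\<in>{1..n}. L i \<in> \<int>"
    and \<mu>: "\<mu> \<in> \<int>" "0 \<le> \<mu>" and B: "B \<subseteq> {1..n-2}" "short n L (insert n B)" "sum L B = \<mu>"
  shows "2 * \<mu> + 1 \<le> (\<Sum>i=1..n-2. min (L i) (\<mu> + 1))"
proof -
  have total: "sum L {1..n} = sum L {1..n-2} + L (n-1) + L n"
    using n by (intro sum_Icc_last_two) simp
  have "B \<subseteq> {1..n-1}"
    using B(1) by (auto simp: subset_iff)
  then have "2 * \<mu> + 2 * L n < sum L {1..n}"
    using B n short_insert_last_iff[of n B L] by simp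
  moreover have "L (n-1) \<le> L n"
    using lv n unfolding length_vector_def by simp
  ultimately have "2 * \<mu> < sum L {1..n-2}"
    using total by simp
  then show ?thesis
    using B \<mu> lv int unfolding length_vector_def
    by (intro sum_min_ge_double_add_one) (auto intro: less_imp_le)
qed

lemma exists_normal_form_same_short:
  assumes lv: "length_vector n L" and gen: "generic n L" and int: "\<forall>i\<in>{1..n}. L i \<in> \<int>"
  obtains l' where "normal_form n l'" "\<And>S. n \<in> S \<Longrightarrow> short n l' S \<longleftrightarrow> short n L S"
proof (cases "L n + L (n-1) \<le> sum L {1..n-2} + 1")
  case True
  then show thesis
    using that assms unfolding normal_form_def by blast
next
  case False
  have n: "3 \<le> n"
    using length_vector_generic_ge_3[OF lv gen] .
  have long: "sum L {1..n-2} \<le> L (n-1) + L n"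
    using False by linarith
  obtain \<mu> B where \<mu>: "\<mu> \<in> \<int>" "0 \<le> \<mu>"
      and short_L: "\<And>A. A \<subseteq> {1..n-1} \<Longrightarrow> short n L (insert n A) \<longleftrightarrow> n - 1 \<notin> A \<and> sum L A \<le> \<mu>"
      and B: "B \<subseteq> {1..n-2}" "short n L (insert n B)" "sum L B = \<mu>"
    using exists_short_threshold[OF n lv int long] by blast
  note wide = capped_sum_ge_double_threshold[OF n lv int \<mu> B]
  have entries: "\<forall>i\<in>{1..n-2}. 0 \<le> L i \<and> L i \<in> \<int>"
    using lv int unfolding length_vector_def by (auto intro: less_imp_le)
  have "short n (capped_lv n \<mu> L) S \<longleftrightarrow> short n L S" if "n \<in> S" for S
  proof (cases "S - {n} \<subseteq> {1..n-1}")
    case True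
    then show ?thesis
      using short_capped_lv_iff[OF n entries \<mu> True] short_L[OF True] that
      by (simp add: insert_absorb)
  next
    case False
    then show ?thesis
      using short_last_iff[of n S] that n by simp
  qed
  then show thesis
    using that normal_form_capped_lv[OF n lv int \<mu> wide] by blast
qed

theorem proposition3p1:
  shows "(\<forall>n l. length_vector n l \<and> generic n l \<longrightarrow>
            (\<exists>l'. normal_form n l' \<and> equivalent_lv n l l')) \<and>
         (\<forall>n l. normal_form n l \<longrightarrow> gees n l = gees (n+1) (extend_lv n l))"
proof (intro conjI allI impI)
  fix n l assume "length_vector n l \<and> generic n l"
  then have "length_vector n l" "generic n l"
    by simp_all
  then obtain L where L: "length_vector n L" "generic n L" "\<forall>i\<in>{1..n}. L i \<in> \<int>"
      and short_L: "\<And>S. short n L S \<longleftrightarrow> short n l S"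
    using exists_integer_lv_same_short by metis
  obtain l' where l': "normal_form n l'" "\<And>S. n \<in> S \<Longrightarrow> short n l' S \<longleftrightarrow> short n L S"
    using exists_normal_form_same_short[OF L] by blast
  have "genes n l = genes n l'"
    using l'(2) short_L by (intro genes_cong) simp
  then show "\<exists>l'. normal_form n l' \<and> equivalent_lv n l l'"
    unfolding equivalent_lv_def using l'(1) by blast
next
  fix n l assume "normal_form n l"
  then have lv: "length_vector n l" and gen: "generic n l"
    unfolding normal_form_def by simp_all
  have "1 \<le> n"
    using length_vector_generic_ge_3[OF lv gen] by simp
  moreover have "\<forall>i\<in>{1..n-1}. 0 \<le> l i"
    using lv unfolding length_vector_def by (auto intro: less_imp_le)
  ultimately show "gees n l = gees (n+1) (extend_lv n l)"
    by (rule gees_extend_lv)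
qed

end
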